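(* Let $n\ge1$, let $\eta=\begin{pmatrix}0&1\\1&0\end{pmatrix}^{\oplus n}\in\mathbb{F}_2^{2n\times2n}$, let $\omega=J-I\in\mathbb{F}_2^{2n\times 2n}$, and let $W\in\mathbb{F}_2^{2n\times2n}$ be the upper-triangular part, including the diagonal, of the complement $J-\eta$ (i.e. $W_{ik}=(J-\eta)_{ik}$ for $i\le k$ and $W_{ik}=0$ for $i>k$). Then $\omega=W^T\eta W$ and $W^2=I$.
   Context: All arithmetic is over $\mathbb{F}_2$. $J$ denotes the $2n\times 2n$ all-ones matrix and $I$ the identity; $\oplus$ denotes block-diagonal direct sum. *)

theory Defs
  imports "HOL-Library.Z2" "Jordan_Normal_Form.Matrix"
begin

definition allones :: "nat \<Rightarrow> bit mat" where
  "allones n = mat (2*n) (2*n) (\<lambda>_. 1)"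

text \<open>eta = direct sum of n copies of [[0,1],[1,0]]: the 2x2 diagonal blocks are the
  index pairs {2k, 2k+1}; entry is 1 iff i, j lie in the same block and differ.\<close>
definition eta :: "nat \<Rightarrow> bit mat" where
  "eta n = mat (2*n) (2*n) (\<lambda>(i,j). if i div 2 = j div 2 \<and> i \<noteq> j then 1 else 0)"

definition omega :: "nat \<Rightarrow> bit mat" where
  "omega n = allones n - 1\<^sub>m (2*n)"

definition Wmat :: "nat \<Rightarrow> bit mat" where
  "Wmat n = mat (2*n) (2*n) (\<lambda>(i,k). if i \<le> k then (allones n - eta n) $$ (i,k) else 0)"

end

theory Submission
  imports Defs
begin

text \<open>Read in the 2x2 diagonal blocks, \<open>W\<close> is the identity plus the all-ones matrix on the
  strictly block-upper-triangular part: \<open>W\<^sub>i\<^sub>k = 1\<close> iff \<open>i = k\<close> or the block of \<open>i\<close> precedes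
  the block of \<open>k\<close>. Both \<open>W\<^sup>T\<eta>W\<close> and \<open>W\<^sup>2\<close> are sums over blocks, and the contribution of a
  block \<open>k\<close> to the entry in block row \<open>p\<close> and block column \<open>q\<close> depends only on how \<open>k\<close> compares
  with \<open>p\<close> and \<open>q\<close>. In \<open>W\<^sup>T\<eta>W\<close> only \<open>k = min p q\<close> contributes, namely 1 off the diagonal;
  in \<open>W\<^sup>2\<close> the blocks \<open>k = p\<close> and \<open>k = q\<close> contribute, and over \<open>\<bbbF>\<^sub>2\<close> they cancel unless the
  entry is diagonal.\<close>

lemma of_bool_add_bit: "of_bool P + of_bool Q = (of_bool (P \<noteq> Q) :: bit)"
  by (cases P; cases Q) simp_all

lemma sum_lessThan_pairs:
  fixes f :: "nat \<Rightarrow> 'a::comm_monoid_add"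
  shows "(\<Sum>l<2*m. f l) = (\<Sum>k<m. f (2*k) + f (2*k+1))"
  by (induction m) (auto simp: algebra_simps)

lemma sum_of_bool_eq_conj:
  fixes m n :: nat
  assumes "m < n"
  shows "(\<Sum>k<n. of_bool (k = m \<and> P)) = (of_bool P :: 'a::semiring_1)"
proof -
  have "(\<Sum>k<n. of_bool (k = m \<and> P)) = (\<Sum>k<n. if k = m then of_bool P else (0::'a))"
    by (intro sum.cong refl) simp
  then show ?thesis
    using assms by (simp only: sum.delta finite_lessThan lessThan_iff if_True)
qed

lemma less_double_blockE:
  fixes i n :: nat
  assumes "i < 2*n"
  obtains p s where "i = 2*p + s" "s < 2" "p < n"
proof
  show "i = 2*(i div 2) + i mod 2" "i mod 2 < 2" "i div 2 < n"
    using assms by auto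
qed

lemma transpose_mat_mat: "transpose_mat (mat m l f) = mat l m (\<lambda>(i, j). f (j, i))"
  by (rule eq_matI) auto

lemma mat_mult_mat:
  "mat m l f * mat l k g = mat m k (\<lambda>(i, j). \<Sum>a<l. f (i, a) * g (a, j))"
  by (rule eq_matI) (auto simp: scalar_prod_def lessThan_atLeast0 intro!: sum.cong)

definition partner :: "nat \<Rightarrow> nat" where
  "partner a = (if even a then a + 1 else a - 1)"

definition eta_entry :: "nat \<Rightarrow> nat \<Rightarrow> bit" where
  "eta_entry a b = of_bool (b = partner a)"

definition W_entry :: "nat \<Rightarrow> nat \<Rightarrow> bit" where
  "W_entry i k = of_bool (i = k \<or> i div 2 < k div 2)"

lemma partner_even: "partner (2*k) = 2*k + 1"
  unfolding partner_def by simp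

lemma partner_odd: "partner (2*k + 1) = 2*k"
  unfolding partner_def by simp

lemma partner_less: "a < 2*n \<Longrightarrow> partner a < 2*n"
  unfolding partner_def by auto

lemma eta_eq_mat: "eta n = mat (2*n) (2*n) (\<lambda>(a, b). eta_entry a b)"
  unfolding eta_def eta_entry_def partner_def
  by (intro cong_mat) (auto elim!: evenE oddE)

lemma Wmat_eq_mat: "Wmat n = mat (2*n) (2*n) (\<lambda>(i, k). W_entry i k)"
proof -
  have "(if i \<le> k then (allones n - eta n) $$ (i, k) else 0) = W_entry i k"
    if "i < 2*n" "k < 2*n" for i k
    using that unfolding allones_def eta_def W_entry_def
    by (cases "i \<le> k"; cases "i div 2 = k div 2") auto
  then show ?thesis
    unfolding Wmat_def by (intro cong_mat refl) (simp only: prod.case)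
qed

lemma omega_eq_mat: "omega n = mat (2*n) (2*n) (\<lambda>(i, j). of_bool (i \<noteq> j))"
  unfolding omega_def allones_def by (rule eq_matI) auto

lemma one_mat_eq_mat: "1\<^sub>m n = mat n n (\<lambda>(i, j). of_bool (i = j))"
  unfolding one_mat_def by (intro cong_mat) simp_all

lemma sum_eta_entry_mult:
  fixes g :: "nat \<Rightarrow> bit"
  assumes "a < 2*n"
  shows "(\<Sum>b<2*n. eta_entry a b * g b) = g (partner a)"
proof -
  have "(\<Sum>b<2*n. eta_entry a b * g b) = (\<Sum>b<2*n. if b = partner a then g b else 0)"
    by (intro sum.cong refl) (simp add: eta_entry_def)
  then show ?thesis
    using partner_less[OF assms] by (simp only: sum.delta finite_lessThan lessThan_iff if_True)
qed

lemma W_entry_blocks: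
  assumes "s < 2" "t < 2"
  shows "W_entry (2*p + s) (2*q + t) = of_bool (p = q \<and> s = t \<or> p < q)"
  using assms unfolding W_entry_def by (simp add: of_bool_eq_iff) arith

lemma W_eta_W_block:
  assumes "s < 2" "t < 2"
  shows "W_entry (2*k) (2*p + s) * W_entry (2*k + 1) (2*q + t)
       + W_entry (2*k + 1) (2*p + s) * W_entry (2*k) (2*q + t)
       = of_bool (k = min p q \<and> (p \<noteq> q \<or> s \<noteq> t))"
proof -
  have "W_entry (2*k + u) (2*p + s) = of_bool (k = p \<and> u = s \<or> k < p)"
    "W_entry (2*k + u) (2*q + t) = of_bool (k = q \<and> u = t \<or> k < q)" if "u < 2" for u
    using W_entry_blocks that assms by blast+
  from this[of 0] this[of 1] show ?thesis
    using assms
    by (cases s; cases t; cases "k < p"; cases "k = p"; cases "k < q"; cases "k = q")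
      (simp_all add: min_def)
qed

lemma W_W_block:
  assumes "s < 2" "t < 2"
  shows "W_entry (2*p + s) (2*k) * W_entry (2*k) (2*q + t)
       + W_entry (2*p + s) (2*k + 1) * W_entry (2*k + 1) (2*q + t)
       = of_bool (k = p \<and> (p < q \<or> p = q \<and> s = t)) + of_bool (k = q \<and> p < q)"
proof -
  have "W_entry (2*p + s) (2*k + u) = of_bool (p = k \<and> s = u \<or> p < k)"
    "W_entry (2*k + u) (2*q + t) = of_bool (k = q \<and> u = t \<or> k < q)" if "u < 2" for u
    using W_entry_blocks that assms by blast+
  from this[of 0] this[of 1] show ?thesis
    using assms
    by (cases s; cases t; cases "k < p"; cases "k = p"; cases "k < q"; cases "k = q")
      simp_all
qed

lemma W_eta_W_entry:
  assumes "p < n" "q < n" "s < 2" "t < 2"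
  shows "(\<Sum>a<2*n. W_entry a (2*p + s) * W_entry (partner a) (2*q + t))
       = of_bool (2*p + s \<noteq> 2*q + t)"
proof -
  have "(\<Sum>a<2*n. W_entry a (2*p + s) * W_entry (partner a) (2*q + t))
      = (\<Sum>k<n. of_bool (k = min p q \<and> (p \<noteq> q \<or> s \<noteq> t)))"
    unfolding sum_lessThan_pairs partner_even partner_odd W_eta_W_block[OF assms(3,4)] ..
  also have "\<dots> = of_bool (p \<noteq> q \<or> s \<noteq> t)"
    using assms(1,2) by (intro sum_of_bool_eq_conj) simp
  also have "\<dots> = of_bool (2*p + s \<noteq> 2*q + t)"
    using assms(3,4) by (simp add: of_bool_eq_iff) arith
  finally show ?thesis .
qed

lemma W_W_entry:
  assumes "p < n" "q < n" "s < 2" "t < 2"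
  shows "(\<Sum>a<2*n. W_entry (2*p + s) a * W_entry a (2*q + t)) = of_bool (2*p + s = 2*q + t)"
proof -
  have "(\<Sum>a<2*n. W_entry (2*p + s) a * W_entry a (2*q + t))
      = (\<Sum>k<n. of_bool (k = p \<and> (p < q \<or> p = q \<and> s = t)) + of_bool (k = q \<and> p < q))"
    unfolding sum_lessThan_pairs W_W_block[OF assms(3,4)] ..
  also have "\<dots> = of_bool (p < q \<or> p = q \<and> s = t) + of_bool (p < q)"
    unfolding sum.distrib using assms(1,2) by (simp only: sum_of_bool_eq_conj)
  also have "\<dots> = of_bool (2*p + s = 2*q + t)"
    using assms(3,4) unfolding of_bool_add_bit by (simp add: of_bool_eq_iff) arith
  finally show ?thesis .
qed

lemma eta_mult_Wmat: "eta n * Wmat n = mat (2*n) (2*n) (\<lambda>(a, j). W_entry (partner a) j)"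
  unfolding Wmat_eq_mat eta_eq_mat mat_mult_mat
  by (intro cong_mat refl) (simp only: prod.case sum_eta_entry_mult)

lemma omega_eq_congruence: "omega n = transpose_mat (Wmat n) * eta n * Wmat n"
proof -
  have "transpose_mat (Wmat n) * eta n * Wmat n = transpose_mat (Wmat n) * (eta n * Wmat n)"
    by (rule assoc_mult_mat[of _ "2*n" "2*n" _ "2*n" _ "2*n"]) (auto simp: Wmat_def eta_def)
  also have "\<dots> = mat (2*n) (2*n) (\<lambda>(i, j). \<Sum>a<2*n. W_entry a i * W_entry (partner a) j)"
    unfolding eta_mult_Wmat unfolding Wmat_eq_mat transpose_mat_mat mat_mult_mat
    by (simp only: prod.case)
  also have "\<dots> = omega n"
    unfolding omega_eq_mat
  proof (intro cong_mat refl, unfold prod.case)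
    fix i j assume "i < 2*n" "j < 2*n"
    then show "(\<Sum>a<2*n. W_entry a i * W_entry (partner a) j) = of_bool (i \<noteq> j)"
      by (elim less_double_blockE) (simp only: W_eta_W_entry)
  qed
  finally show ?thesis ..
qed

lemma Wmat_involution: "Wmat n * Wmat n = 1\<^sub>m (2*n)"
  unfolding Wmat_eq_mat mat_mult_mat one_mat_eq_mat
proof (intro cong_mat refl, unfold prod.case)
  fix i j assume "i < 2*n" "j < 2*n"
  then show "(\<Sum>a<2*n. W_entry i a * W_entry a j) = of_bool (i = j)"
    by (elim less_double_blockE) (simp only: W_W_entry)
qed

theorem mainTheorem3:
  fixes n :: nat
  assumes "n \<ge> 1"
  shows "omega n = transpose_mat (Wmat n) * eta n * Wmat n \<and> Wmat n * Wmat n = 1\<^sub>m (2*n)"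
  using omega_eq_congruence Wmat_involution by blast

end
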